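(* Let $X$ be a real Hilbert space, let $D$ be a nonempty subset of $X$, let $T\colon D\to X$, let $\alpha\in\,]0,+\infty[$, set $A=T^{-1}-\mathrm{Id}$ (so $T=J_A$) and $\rho=\tfrac{1}{2\alpha}-1>-1$. Then: (i) $T$ is $\alpha$-conically nonexpansive $\iff$ $A$ is $\rho$-comonotone. (ii) [$T$ is $\alpha$-conically nonexpansive and $D=X$] $\iff$ $A$ is maximally $\rho$-comonotone. (iii) $T$ is nonexpansive $\iff$ $A$ is $(-\tfrac12)$-comonotone. (iv) [$T$ is nonexpansive and $D=X$] $\iff$ $A$ is maximally $(-\tfrac12)$-comonotone. If moreover $\alpha\in\,]0,1[$, equivalently $\rho>-\tfrac12$, then also: (v) $T$ is $\alpha$-averaged $\iff$ $A$ is $\rho$-comonotone. (vi) [$T$ is $\alpha$-averaged and $D=X$] $\iff$ $A$ is maximally $\rho$-comonotone.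
   Context: For $T\colon D\to X$, $T^{-1}$ is the set-valued inverse and $J_A=(\mathrm{Id}+A)^{-1}$. A map $N\colon D\to X$ is nonexpansive if $\|Nx-Ny\|\le\|x-y\|$ for all $x,y\in D$. For $\alpha>0$, $T$ is $\alpha$-conically nonexpansive if $T=(1-\alpha)\mathrm{Id}+\alpha N$ for some nonexpansive $N\colon D\to X$; for $\alpha\in]0,1[$, $\alpha$-averaged means the same. For $\rho\in\mathbb R$, $A\colon X\rightrightarrows X$ is $\rho$-comonotone if $\langle x-y,u-v\rangle\ge\rho\|u-v\|^2$ for all $(x,u),(y,v)\in\operatorname{gra}A$; maximally $\rho$-comonotone if moreover no $\rho$-comonotone operator has a graph properly containing $\operatorname{gra}A$. *)

theory Defs
  imports "HOL-Analysis.Analysis"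
begin

text \<open>Set-valued operators X \<rightrightarrows> X are modelled as functions 'a \<Rightarrow> 'a set;
  single-valued maps T : D \<rightarrow> X as functions 'a \<Rightarrow> 'a together with the domain D.\<close>

definition gra :: "('a \<Rightarrow> 'a set) \<Rightarrow> ('a \<times> 'a) set" where
  "gra A = {(x, u). u \<in> A x}"

definition inv_op :: "'a set \<Rightarrow> ('a \<Rightarrow> 'a) \<Rightarrow> ('a \<Rightarrow> 'a set)" where
  "inv_op D T = (\<lambda>y. {x \<in> D. T x = y})"

definition minus_Id :: "('a::ab_group_add \<Rightarrow> 'a set) \<Rightarrow> ('a \<Rightarrow> 'a set)" where
  "minus_Id B = (\<lambda>y. {x - y | x. x \<in> B y})"

definition nonexpansive_on :: "'a set \<Rightarrow> ('a::real_normed_vector \<Rightarrow> 'a) \<Rightarrow> bool" where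
  "nonexpansive_on D N \<longleftrightarrow> (\<forall>x\<in>D. \<forall>y\<in>D. norm (N x - N y) \<le> norm (x - y))"

definition conically_nonexpansive_on :: "real \<Rightarrow> 'a set \<Rightarrow> ('a::real_normed_vector \<Rightarrow> 'a) \<Rightarrow> bool" where
  "conically_nonexpansive_on \<alpha> D T \<longleftrightarrow> 0 < \<alpha> \<and>
     (\<exists>N. nonexpansive_on D N \<and> (\<forall>x\<in>D. T x = (1 - \<alpha>) *\<^sub>R x + \<alpha> *\<^sub>R N x))"

definition averaged_on :: "real \<Rightarrow> 'a set \<Rightarrow> ('a::real_normed_vector \<Rightarrow> 'a) \<Rightarrow> bool" where
  "averaged_on \<alpha> D T \<longleftrightarrow> 0 < \<alpha> \<and> \<alpha> < 1 \<and>
     (\<exists>N. nonexpansive_on D N \<and> (\<forall>x\<in>D. T x = (1 - \<alpha>) *\<^sub>R x + \<alpha> *\<^sub>R N x))"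

definition comonotone :: "real \<Rightarrow> ('a::real_inner \<Rightarrow> 'a set) \<Rightarrow> bool" where
  "comonotone \<rho> A \<longleftrightarrow>
     (\<forall>x u y v. (x, u) \<in> gra A \<longrightarrow> (y, v) \<in> gra A \<longrightarrow> inner (x - y) (u - v) \<ge> \<rho> * (norm (u - v))\<^sup>2)"

definition maximally_comonotone :: "real \<Rightarrow> ('a::real_inner \<Rightarrow> 'a set) \<Rightarrow> bool" where
  "maximally_comonotone \<rho> A \<longleftrightarrow> comonotone \<rho> A \<and>
     \<not> (\<exists>B. comonotone \<rho> B \<and> gra A \<subset> gra B)"

end

theory Submission
  imports Defs
begin

(* Write T = (1 - alpha) Id + alpha N.  For x, y in D put t = T x - T y and
   u = (x - T x) - (y - T y); then x - y = t + u and alpha (N x - N y) = alpha t - (1 - alpha) u,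
   and expanding squares shows that |N x - N y| <= |x - y| is equivalent to
   rho |u|^2 <= <t, u>.  As gra A = {(T x, x - T x) | x in D}, this is (i), and (iii), (v) are the
   cases alpha = 1 and alpha < 1.

   Maximality: if D = X, a point (p, u) of any rho-comonotone extension of A, compared with
   (T x, x - T x) for x = p + u, gives (1 + rho) |p - T x|^2 <= 0, so it already lies in gra A.
   If D <> X, extending N nonexpansively to one more point z (Kirszbraun-Valentine) yields a
   strictly larger rho-comonotone operator.  The one-point extension is proved directly: for
   finitely many points, a minimiser of max_x (|v - N x|^2 - |z - x|^2) lies in the convex hull of
   the active N x, where the Kirszbraun-Valentine inequality for convex combinations shows that
   the maximum is <= 0; the general case follows from a finite intersection property of bounded
   closed convex sets in Hilbert space, which replaces weak compactness. *)

section \<open>The Kirszbraun--Valentine inequality\<close>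

lemma weighted_sum_norm_diff_sq:
  fixes a :: "'i \<Rightarrow> 'a::real_inner"
  assumes "sum \<mu> J = 1"
  defines "c \<equiv> (\<Sum>i\<in>J. \<mu> i *\<^sub>R a i)"
  shows "(\<Sum>i\<in>J. \<mu> i * (norm (v - a i))\<^sup>2) = (norm (v - c))\<^sup>2 + (\<Sum>i\<in>J. \<mu> i * (norm (c - a i))\<^sup>2)"
proof -
  have expand: "(norm (v - a i))\<^sup>2 = (norm (v - c))\<^sup>2 + 2 * inner (v - c) (c - a i) + (norm (c - a i))\<^sup>2" for i
    using dot_norm[of "v - c" "c - a i"] by simp
  have "(\<Sum>i\<in>J. \<mu> i *\<^sub>R (c - a i)) = sum \<mu> J *\<^sub>R c - c"
    by (simp add: c_def scaleR_diff_right sum_subtractf scaleR_sum_left)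
  then have "inner (v - c) (\<Sum>i\<in>J. \<mu> i *\<^sub>R (c - a i)) = 0"
    using assms(1) by simp
  then have "(\<Sum>i\<in>J. \<mu> i * inner (v - c) (c - a i)) = 0"
    by (simp add: inner_sum_right)
  then show ?thesis
    using assms(1) by (simp add: expand distrib_left sum.distrib mult.left_commute[of "\<mu> _" 2] sum_distrib_left[symmetric] sum_distrib_right[symmetric])
qed

lemma weighted_variance_eq_pairwise:
  fixes a :: "'i \<Rightarrow> 'a::real_inner"
  assumes "sum \<mu> J = 1"
  defines "c \<equiv> (\<Sum>i\<in>J. \<mu> i *\<^sub>R a i)"
  shows "(\<Sum>i\<in>J. \<mu> i * (norm (c - a i))\<^sup>2) = (\<Sum>i\<in>J. \<Sum>j\<in>J. \<mu> i * \<mu> j * (norm (a i - a j))\<^sup>2) / 2"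
proof -
  define V where "V = (\<Sum>i\<in>J. \<mu> i * (norm (c - a i))\<^sup>2)"
  have "(\<Sum>j\<in>J. \<mu> j * (norm (a i - a j))\<^sup>2) = (norm (c - a i))\<^sup>2 + V" for i
    using weighted_sum_norm_diff_sq[OF assms(1), of "a i" a] by (simp add: c_def V_def norm_minus_commute)
  then have "(\<Sum>i\<in>J. \<Sum>j\<in>J. \<mu> i * \<mu> j * (norm (a i - a j))\<^sup>2) = (\<Sum>i\<in>J. \<mu> i * ((norm (c - a i))\<^sup>2 + V))"
    by (simp add: mult.assoc sum_distrib_left[symmetric])
  also have "\<dots> = 2 * V"
    using assms(1) by (simp add: V_def distrib_left sum.distrib sum_distrib_right[symmetric])
  finally show ?thesis by (simp add: V_def)
qed

lemma weighted_sum_dist_sq_le_of_nonexpansive: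
  fixes x y :: "'i \<Rightarrow> 'a::real_inner"
  assumes "\<forall>i\<in>J. 0 \<le> \<mu> i" "sum \<mu> J = 1"
    and "\<forall>i\<in>J. \<forall>j\<in>J. norm (y i - y j) \<le> norm (x i - x j)"
  shows "(\<Sum>i\<in>J. \<mu> i * (norm ((\<Sum>j\<in>J. \<mu> j *\<^sub>R y j) - y i))\<^sup>2) \<le> (\<Sum>i\<in>J. \<mu> i * (norm (z - x i))\<^sup>2)"
proof -
  define c where "c = (\<Sum>j\<in>J. \<mu> j *\<^sub>R x j)"
  have "(\<Sum>i\<in>J. \<Sum>j\<in>J. \<mu> i * \<mu> j * (norm (y i - y j))\<^sup>2) \<le> (\<Sum>i\<in>J. \<Sum>j\<in>J. \<mu> i * \<mu> j * (norm (x i - x j))\<^sup>2)"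
    using assms(1,3) by (intro sum_mono mult_left_mono power_mono) auto
  then have "(\<Sum>i\<in>J. \<mu> i * (norm ((\<Sum>j\<in>J. \<mu> j *\<^sub>R y j) - y i))\<^sup>2) \<le> (\<Sum>i\<in>J. \<mu> i * (norm (c - x i))\<^sup>2)"
    unfolding c_def weighted_variance_eq_pairwise[OF assms(2)] by simp
  also have "\<dots> \<le> (\<Sum>i\<in>J. \<mu> i * (norm (z - x i))\<^sup>2)"
    unfolding weighted_sum_norm_diff_sq[OF assms(2), of z x] c_def by simp
  finally show ?thesis .
qed

lemma nonexpansive_on_convex_hull_image:
  fixes N :: "'a::real_inner \<Rightarrow> 'a"
  assumes "nonexpansive_on S N" "w \<in> convex hull (N ` S)"
  shows "\<exists>x\<in>S. norm (w - N x) \<le> norm (z - x)"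
proof -
  obtain P u where P: "finite P" "P \<subseteq> N ` S" "\<forall>p\<in>P. 0 \<le> u p" "sum u P = 1" "(\<Sum>p\<in>P. u p *\<^sub>R p) = w"
    using assms(2) unfolding convex_hull_explicit by blast
  define g where "g = inv_into S N"
  have g: "g p \<in> S" "N (g p) = p" if "p \<in> P" for p
    using P(2) that by (auto simp: g_def inv_into_into f_inv_into_f)
  have "\<forall>p\<in>P. \<forall>q\<in>P. norm (p - q) \<le> norm (g p - g q)"
    using assms(1) g unfolding nonexpansive_on_def by metis
  then have sum_le: "(\<Sum>p\<in>P. u p * (norm (w - p))\<^sup>2) \<le> (\<Sum>p\<in>P. u p * (norm (z - g p))\<^sup>2)"
    using weighted_sum_dist_sq_le_of_nonexpansive[OF P(3,4), of "\<lambda>p. p" g z] P(5) by simp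
  obtain p0 where p0: "p0 \<in> P" "0 < u p0"
  proof -
    have "\<not> (\<forall>p\<in>P. u p \<le> 0)" using P(4) sum_nonpos[of P u] by force
    then show thesis using that by (auto simp: not_le)
  qed
  have "\<exists>p\<in>P. norm (w - p) \<le> norm (z - g p)"
  proof (rule ccontr)
    assume "\<not> ?thesis"
    then have "(norm (z - g p))\<^sup>2 < (norm (w - p))\<^sup>2" if "p \<in> P" for p
      using that by (simp add: not_le power_strict_mono)
    then have "(\<Sum>p\<in>P. u p * (norm (z - g p))\<^sup>2) < (\<Sum>p\<in>P. u p * (norm (w - p))\<^sup>2)"
      using P(1,3) p0 by (intro sum_strict_mono_ex1) (auto intro: mult_left_mono mult_strict_left_mono less_imp_le)
    with sum_le show False by simp
  qed
  then show ?thesis using g by metis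
qed

section \<open>Minimising a maximum of squared distances\<close>

lemma norm_diff_sq_decreases_along:
  fixes w b k :: "'a::real_inner"
  assumes "(norm k)\<^sup>2 \<le> inner (w - b) k" "k \<noteq> 0" "0 < t" "t < 1"
  shows "(norm (w - t *\<^sub>R k - b))\<^sup>2 < (norm (w - b))\<^sup>2"
proof -
  have "w - t *\<^sub>R k - b = (w - b) - t *\<^sub>R k" by simp
  also have "(norm \<dots>)\<^sup>2 = (norm (w - b))\<^sup>2 - 2 * t * inner (w - b) k + t\<^sup>2 * (norm k)\<^sup>2"
    using dot_norm_neg[of "w - b" "t *\<^sub>R k"] by (simp add: power_mult_distrib)
  also have "\<dots> < (norm (w - b))\<^sup>2"
  proof -
    have "2 * t * (norm k)\<^sup>2 \<le> 2 * t * inner (w - b) k" using assms(1,3) by simp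
    moreover have "0 < t * (2 - t) * (norm k)\<^sup>2" using assms(2-4) by simp
    moreover have "t * (2 - t) * (norm k)\<^sup>2 = 2 * t * (norm k)\<^sup>2 - t\<^sup>2 * (norm k)\<^sup>2"
      by (simp add: algebra_simps power2_eq_square)
    ultimately show ?thesis by linarith
  qed
  finally show ?thesis .
qed

lemma minimizer_of_max_mem_convex_hull_active:
  fixes a :: "'i \<Rightarrow> 'a::real_inner" and c :: "'i \<Rightarrow> real" and S :: "'i set"
  defines "F \<equiv> \<lambda>v. Max ((\<lambda>x. (norm (v - a x))\<^sup>2 - c x) ` S)"
  assumes S: "finite S" "S \<noteq> {}" and min: "\<And>v. F w \<le> F v"
  shows "w \<in> convex hull (a ` {x\<in>S. (norm (w - a x))\<^sup>2 - c x = F w})"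
proof (rule ccontr)
  define f where "f x v = (norm (v - a x))\<^sup>2 - c x" for x v
  define K where "K = convex hull (a ` {x\<in>S. f x w = F w})"
  assume "\<not> ?thesis"
  then have notin: "w \<notin> K" by (simp add: K_def f_def)
  have F_ge: "f x v \<le> F v" if "x \<in> S" for x v
    using S that unfolding F_def f_def by (intro Max_ge) auto
  have "F w \<in> (\<lambda>x. f x w) ` S"
    using S unfolding F_def f_def by (intro Max_in) auto
  then have K: "compact K" "K \<noteq> {}"
    using S by (auto simp: K_def finite_imp_compact_convex_hull)
  obtain y where y: "y \<in> K" "\<forall>b\<in>K. dist w y \<le> dist w b"
    using continuous_attains_inf[OF K continuous_on_dist[OF continuous_on_const continuous_on_id]] by blast
  \<comment> \<open>moving from \<open>w\<close> towards its nearest point \<open>y\<close> of \<open>K\<close> strictly decreases every active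
    term, while the inactive terms stay below \<open>F w\<close> for small steps\<close>
  define k where "k = w - y"
  have "k \<noteq> 0" using notin y(1) by (auto simp: k_def)
  have "\<forall>\<^sub>F t in at_right 0. f x (w - t *\<^sub>R k) < F w" if "x \<in> S" for x
  proof (cases "f x w = F w")
    case True
    then have "a x \<in> K" using that by (auto simp: K_def intro: hull_inc)
    then have "inner (w - y) (a x - y) \<le> 0"
      using any_closest_point_dot[of K y "a x" w] y K(1) by (simp add: K_def compact_imp_closed)
    then have "(norm k)\<^sup>2 \<le> inner (w - a x) k"
      by (simp add: k_def power2_norm_eq_inner inner_diff_left inner_diff_right inner_commute)
    from norm_diff_sq_decreases_along[OF this \<open>k \<noteq> 0\<close>] True
    have "f x (w - t *\<^sub>R k) < F w" if "0 < t" "t < 1" for t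
      using that unfolding f_def by fastforce
    then show ?thesis using eventually_at_right_real[of 0 1] by (auto elim: eventually_mono)
  next
    case False
    have "((\<lambda>t. f x (w - t *\<^sub>R k)) \<longlongrightarrow> f x (w - 0 *\<^sub>R k)) (at_right 0)"
      unfolding f_def by (intro tendsto_intros)
    moreover have "f x w < F w" using F_ge[OF that] False by (simp add: order_less_le)
    ultimately show ?thesis by (simp add: order_tendstoD)
  qed
  then have "\<forall>\<^sub>F t in at_right 0. \<forall>x\<in>S. f x (w - t *\<^sub>R k) < F w"
    using S(1) by (simp add: eventually_ball_finite)
  then obtain t where "\<forall>x\<in>S. f x (w - t *\<^sub>R k) < F w"
    using eventually_happens[of _ "at_right (0::real)"] by auto
  then have "F (w - t *\<^sub>R k) < F w"
    using S unfolding F_def f_def by simp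
  with min show False by (meson not_le)
qed

section \<open>A finite intersection property in Hilbert space\<close>

lemma norm_diff_sq_le_of_near_min_norm:
  fixes C :: "'a::real_inner set"
  assumes "convex C" "p \<in> C" "q \<in> C" "\<And>y. y \<in> C \<Longrightarrow> d - e \<le> (norm y)\<^sup>2"
    and "(norm p)\<^sup>2 \<le> d + e" "(norm q)\<^sup>2 \<le> d + e"
  shows "(norm (p - q))\<^sup>2 \<le> 8 * e"
proof -
  have "(1/2) *\<^sub>R p + (1/2) *\<^sub>R q \<in> C"
    using convexD[OF assms(1-3), of "1/2" "1/2"] by simp
  then have "d - e \<le> (norm ((1/2) *\<^sub>R (p + q)))\<^sup>2"
    using assms(4) by (simp add: scaleR_add_right)
  also have "\<dots> = (norm (p + q))\<^sup>2 / 4"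
    by (simp add: power_mult_distrib power_divide)
  finally have "d - e \<le> (norm (p + q))\<^sup>2 / 4" .
  moreover have "(norm (p + q))\<^sup>2 + (norm (p - q))\<^sup>2 = 2 * (norm p)\<^sup>2 + 2 * (norm q)\<^sup>2"
    unfolding power2_norm_eq_inner by (simp add: inner_add_left inner_add_right inner_diff_left inner_diff_right inner_commute)
  ultimately show ?thesis using assms(5,6) by linarith
qed

lemma Cauchy_of_norm_diff_sq_le:
  fixes X :: "nat \<Rightarrow> 'a::real_normed_vector"
  assumes "\<And>m n. n \<le> m \<Longrightarrow> (norm (X m - X n))\<^sup>2 \<le> \<epsilon> n" and "\<epsilon> \<longlonglongrightarrow> 0"
  shows "Cauchy X"
  unfolding Cauchy_altdef2
proof (intro allI impI)
  fix e :: real assume "0 < e"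
  then obtain N where N: "\<epsilon> N < e\<^sup>2"
    using order_tendstoD(2)[OF assms(2), of "e\<^sup>2"] by (auto simp: eventually_sequentially)
  have "dist (X n) (X N) < e" if "N \<le> n" for n
  proof -
    have "(norm (X n - X N))\<^sup>2 < e\<^sup>2" using assms(1)[OF that] N by linarith
    then show ?thesis using \<open>0 < e\<close> by (simp add: dist_norm power_less_imp_less_base)
  qed
  then show "\<exists>N. \<forall>n\<ge>N. dist (X n) (X N) < e" by blast
qed

definition inf_norm_sq :: "'a::real_normed_vector set \<Rightarrow> real" where
  "inf_norm_sq C = Inf ((\<lambda>p. (norm p)\<^sup>2) ` C)"

lemma bdd_below_norm_sq_image: "bdd_below ((\<lambda>p. (norm p)\<^sup>2) ` C)"
  by (auto intro: bdd_belowI[of _ 0])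

lemma inf_norm_sq_le: "p \<in> C \<Longrightarrow> inf_norm_sq C \<le> (norm p)\<^sup>2"
  unfolding inf_norm_sq_def by (rule cInf_lower) (auto simp: bdd_below_norm_sq_image)

lemma inf_norm_sq_approx: "C \<noteq> {} \<Longrightarrow> 0 < e \<Longrightarrow> \<exists>p\<in>C. (norm p)\<^sup>2 < inf_norm_sq C + e"
  using cInf_lessD[of "(\<lambda>p. (norm p)\<^sup>2) ` C" "inf_norm_sq C + e"] by (auto simp: inf_norm_sq_def)

lemma inf_norm_sq_antimono: "C' \<noteq> {} \<Longrightarrow> C' \<subseteq> C \<Longrightarrow> inf_norm_sq C \<le> inf_norm_sq C'"
  unfolding inf_norm_sq_def by (intro cInf_superset_mono image_mono bdd_below_norm_sq_image) auto

lemma finite_subsets_chain_approx_Sup: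
  fixes f :: "'b set \<Rightarrow> real"
  assumes mono: "\<And>A B. finite B \<Longrightarrow> B \<subseteq> U \<Longrightarrow> A \<subseteq> B \<Longrightarrow> f A \<le> f B"
    and bdd: "\<And>A. finite A \<Longrightarrow> A \<subseteq> U \<Longrightarrow> f A \<le> R"
    and \<epsilon>: "\<And>n. 0 < \<epsilon> n"
  shows "\<exists>d G. incseq G \<and> (\<forall>n. finite (G n) \<and> G n \<subseteq> U \<and> d - \<epsilon> n < f (G n))
    \<and> (\<forall>A. finite A \<and> A \<subseteq> U \<longrightarrow> f A \<le> d)"
proof -
  let ?fin = "{A. finite A \<and> A \<subseteq> U}"
  define d where "d = Sup (f ` ?fin)"
  have upper: "\<forall>A. finite A \<and> A \<subseteq> U \<longrightarrow> f A \<le> d"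
    unfolding d_def using bdd by (auto intro!: cSup_upper bdd_aboveI[of _ R])
  have "{} \<in> ?fin" by simp
  then have "\<forall>n. \<exists>A. A \<in> ?fin \<and> d - \<epsilon> n < f A"
    using less_cSupD[of "f ` ?fin"] \<epsilon> unfolding d_def by force
  then obtain H where H: "\<forall>n. H n \<in> ?fin \<and> d - \<epsilon> n < f (H n)" by (rule choice[THEN exE])
  define G where "G n = (\<Union>k\<le>n. H k)" for n
  have "incseq G" unfolding incseq_def G_def by (intro allI impI UN_mono) auto
  moreover have "finite (G n) \<and> G n \<subseteq> U \<and> d - \<epsilon> n < f (G n)" for n
  proof -
    have G: "finite (G n)" "G n \<subseteq> U" using H by (auto simp: G_def)
    have "f (H n) \<le> f (G n)" using G by (intro mono) (auto simp: G_def)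
    moreover have "d - \<epsilon> n < f (H n)" using H by blast
    ultimately show ?thesis using G by linarith
  qed
  ultimately show ?thesis using upper by blast
qed

lemma near_min_norm_points_converge:
  fixes C :: "nat \<Rightarrow> 'a::{real_inner, complete_space} set"
  assumes convex: "\<And>n. convex (C n)" and dec: "decseq C"
    and \<epsilon>: "decseq \<epsilon>" "\<epsilon> \<longlonglongrightarrow> 0"
    and lower: "\<And>n y. y \<in> C n \<Longrightarrow> d - \<epsilon> n \<le> (norm y)\<^sup>2"
    and p: "\<And>n. p n \<in> C n" "\<And>n. (norm (p n))\<^sup>2 \<le> d + \<epsilon> n"
    and q: "\<And>n. q n \<in> C n" "\<And>n. (norm (q n))\<^sup>2 \<le> d + \<epsilon> n"
  shows "\<exists>w. p \<longlonglongrightarrow> w \<and> q \<longlonglongrightarrow> w"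
proof -
  have close: "(norm (r - p n))\<^sup>2 \<le> 8 * \<epsilon> n" if "r \<in> C n" "(norm r)\<^sup>2 \<le> d + \<epsilon> n" for r n
    using norm_diff_sq_le_of_near_min_norm[OF convex that(1) p(1) lower that(2) p(2)] .
  have "Cauchy p"
  proof (rule Cauchy_of_norm_diff_sq_le)
    fix m n :: nat assume "n \<le> m"
    have "p m \<in> C n" using p(1) dec \<open>n \<le> m\<close> by (auto simp: decseq_def)
    moreover have "(norm (p m))\<^sup>2 \<le> d + \<epsilon> n"
      using p(2)[of m] \<epsilon>(1) \<open>n \<le> m\<close> by (auto simp: decseq_def intro: order_trans)
    ultimately show "(norm (p m - p n))\<^sup>2 \<le> 8 * \<epsilon> n" by (rule close)
  next
    show "(\<lambda>n. 8 * \<epsilon> n) \<longlonglongrightarrow> 0" using tendsto_mult_right_zero[OF \<epsilon>(2)] .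
  qed
  then obtain w where w: "p \<longlonglongrightarrow> w" using Cauchy_convergent_iff convergent_def by blast
  have "(\<lambda>n. q n - p n) \<longlonglongrightarrow> 0"
  proof (rule Lim_null_comparison)
    show "\<forall>\<^sub>F n in sequentially. norm (q n - p n) \<le> sqrt (8 * \<epsilon> n)"
      using close[OF q] by (intro always_eventually allI real_le_rsqrt)
    show "(\<lambda>n. sqrt (8 * \<epsilon> n)) \<longlonglongrightarrow> 0"
      using tendsto_real_sqrt[OF tendsto_mult_right_zero[OF \<epsilon>(2), of 8]] by simp
  qed
  from tendsto_add[OF w this] have "q \<longlonglongrightarrow> w" by simp
  with w show ?thesis by blast
qed

lemma inf_norm_sq_approx_seq:
  assumes "\<And>n. C n \<noteq> {}" "\<And>n. inf_norm_sq (C n) \<le> d" "\<And>n. 0 < \<epsilon> n"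
  shows "\<exists>q. \<forall>n. q n \<in> C n \<and> (norm (q n))\<^sup>2 \<le> d + \<epsilon> n"
proof (rule choice, rule allI)
  fix n
  obtain q where "q \<in> C n" "(norm q)\<^sup>2 < inf_norm_sq (C n) + \<epsilon> n"
    using inf_norm_sq_approx[OF assms(1,3)] by blast
  with assms(2)[of n] show "\<exists>q. q \<in> C n \<and> (norm q)\<^sup>2 \<le> d + \<epsilon> n"
    by (intro exI[of _ q]) auto
qed

lemma inf_norm_sq_finite_Inter_chain:
  fixes S :: "'a::real_normed_vector set" and \<F> :: "'a set set"
  assumes "bounded S" and fip: "\<And>\<F>'. finite \<F>' \<Longrightarrow> \<F>' \<subseteq> \<F> \<Longrightarrow> S \<inter> \<Inter>\<F>' \<noteq> {}"
    and "\<And>n. 0 < \<epsilon> n"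
  shows "\<exists>d G. incseq G \<and> (\<forall>n. finite (G n) \<and> G n \<subseteq> \<F> \<and> d - \<epsilon> n < inf_norm_sq (S \<inter> \<Inter>(G n)))
      \<and> (\<forall>\<F>'. finite \<F>' \<and> \<F>' \<subseteq> \<F> \<longrightarrow> inf_norm_sq (S \<inter> \<Inter>\<F>') \<le> d)"
proof -
  obtain R where R: "\<forall>p\<in>S. norm p \<le> R" using assms(1) bounded_iff by blast
  have bdd: "inf_norm_sq (S \<inter> \<Inter>\<F>') \<le> R\<^sup>2" if \<F>': "finite \<F>'" "\<F>' \<subseteq> \<F>" for \<F>'
  proof -
    obtain p where p: "p \<in> S \<inter> \<Inter>\<F>'" using fip[OF \<F>'] by blast
    have "(norm p)\<^sup>2 \<le> R\<^sup>2" using R p by (intro power_mono) auto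
    with inf_norm_sq_le[OF p] show ?thesis by (rule order_trans)
  qed
  have mono: "inf_norm_sq (S \<inter> \<Inter>\<F>') \<le> inf_norm_sq (S \<inter> \<Inter>\<F>'')"
    if "finite \<F>''" "\<F>'' \<subseteq> \<F>" "\<F>' \<subseteq> \<F>''" for \<F>' \<F>''
    using fip[OF that(1,2)] that(3) by (intro inf_norm_sq_antimono) auto
  show ?thesis
    by (rule finite_subsets_chain_approx_Sup[where f = "\<lambda>\<F>'. inf_norm_sq (S \<inter> \<Inter>\<F>')"]) (fact mono bdd assms(3))+
qed

lemma bounded_closed_convex_imp_fip:
  fixes S :: "'a::{real_inner, complete_space} set" and \<F> :: "'a set set"
  assumes S: "bounded S" "closed S" "convex S"
    and \<F>: "\<And>T. T \<in> \<F> \<Longrightarrow> closed T" "\<And>T. T \<in> \<F> \<Longrightarrow> convex T"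
    and fip: "\<And>\<F>'. finite \<F>' \<Longrightarrow> \<F>' \<subseteq> \<F> \<Longrightarrow> S \<inter> \<Inter>\<F>' \<noteq> {}"
  shows "S \<inter> \<Inter>\<F> \<noteq> {}"
proof -
  (* In place of weak compactness: inf_norm_sq increases along finite subfamilies; near-minimal
     points along a chain that approaches the supremum d form a Cauchy sequence, and every T in F
     contains near-minimal points with the same limit. *)
  define \<epsilon> :: "nat \<Rightarrow> real" where "\<epsilon> n = inverse (real (Suc n))" for n
  have \<epsilon>: "decseq \<epsilon>" "\<epsilon> \<longlonglongrightarrow> 0" "\<And>n. 0 < \<epsilon> n"
    unfolding \<epsilon>_def[abs_def] decseq_def
    by (simp_all add: le_imp_inverse_le LIMSEQ_inverse_real_of_nat del: of_nat_Suc)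
  have "\<exists>d G. incseq G \<and> (\<forall>n. finite (G n) \<and> G n \<subseteq> \<F> \<and> d - \<epsilon> n < inf_norm_sq (S \<inter> \<Inter>(G n)))
      \<and> (\<forall>\<F>'. finite \<F>' \<and> \<F>' \<subseteq> \<F> \<longrightarrow> inf_norm_sq (S \<inter> \<Inter>\<F>') \<le> d)"
    by (rule inf_norm_sq_finite_Inter_chain) (fact S(1) fip \<epsilon>(3))+
  then obtain d G where "incseq G" "\<forall>n. finite (G n) \<and> G n \<subseteq> \<F> \<and> d - \<epsilon> n < inf_norm_sq (S \<inter> \<Inter>(G n))"
    and d: "\<forall>\<F>'. finite \<F>' \<and> \<F>' \<subseteq> \<F> \<longrightarrow> inf_norm_sq (S \<inter> \<Inter>\<F>') \<le> d"
    by (elim exE conjE) (rule that)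
  then have G: "incseq G" "\<And>n. finite (G n)" "\<And>n. G n \<subseteq> \<F>"
    "\<And>n. d - \<epsilon> n < inf_norm_sq (S \<inter> \<Inter>(G n))" by auto
  have near_min_seq: "\<exists>q. \<forall>n. q n \<in> S \<inter> \<Inter>(K n) \<and> (norm (q n))\<^sup>2 \<le> d + \<epsilon> n"
    if K: "\<And>n. finite (K n)" "\<And>n. K n \<subseteq> \<F>" for K
    using fip[OF K] d K \<epsilon>(3) by (intro inf_norm_sq_approx_seq) auto
  define C where "C n = S \<inter> \<Inter>(G n)" for n
  have C_convex: "convex (C n)" for n
    using S(3) \<F>(2) G(3) by (auto simp: C_def intro!: convex_Int convex_Inter)
  have "decseq C" using G(1) unfolding decseq_def incseq_def C_def by blast
  have lower: "d - \<epsilon> n \<le> (norm y)\<^sup>2" if "y \<in> C n" for n y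
    using G(4)[of n] inf_norm_sq_le[of y "C n"] that unfolding C_def by linarith
  obtain p where "\<forall>n. p n \<in> C n \<and> (norm (p n))\<^sup>2 \<le> d + \<epsilon> n"
    using near_min_seq[of G, OF G(2,3)] unfolding C_def by blast
  then have p: "\<And>n. p n \<in> C n" "\<And>n. (norm (p n))\<^sup>2 \<le> d + \<epsilon> n" by auto
  have converge: "\<exists>w. p \<longlonglongrightarrow> w \<and> q \<longlonglongrightarrow> w"
    if "\<And>n. q n \<in> C n" "\<And>n. (norm (q n))\<^sup>2 \<le> d + \<epsilon> n" for q
    by (rule near_min_norm_points_converge[of C \<epsilon> d p q]) (use C_convex \<open>decseq C\<close> \<epsilon> lower p that in auto)
  obtain w where w: "p \<longlonglongrightarrow> w" using converge[OF p] by blast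
  have "w \<in> T" if T: "T \<in> \<F>" for T
  proof -
    from near_min_seq[of "\<lambda>n. insert T (G n)"] G(2,3) T
    obtain q where "\<forall>n. q n \<in> S \<inter> \<Inter>(insert T (G n)) \<and> (norm (q n))\<^sup>2 \<le> d + \<epsilon> n" by blast
    then have q: "\<And>n. q n \<in> C n" "\<And>n. (norm (q n))\<^sup>2 \<le> d + \<epsilon> n" "\<And>n. q n \<in> T"
      by (auto simp: C_def)
    obtain w' where "p \<longlonglongrightarrow> w'" "q \<longlonglongrightarrow> w'" using converge[OF q(1,2)] by blast
    with LIMSEQ_unique[OF w] have "q \<longlonglongrightarrow> w" by simp
    with closed_sequentially[OF \<F>(1)[OF T] q(3)] show ?thesis .
  qed
  moreover have "p n \<in> S" for n using p(1) by (auto simp: C_def)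
  with closed_sequentially[OF S(2)] w have "w \<in> S" by blast
  ultimately show ?thesis by blast
qed

lemma nested_closed_convex_Inter_nonempty:
  fixes L :: "real \<Rightarrow> 'a::{real_inner, complete_space} set"
  assumes mono: "\<And>s t. s \<le> t \<Longrightarrow> L s \<subseteq> L t"
    and ne: "\<And>t. m < t \<Longrightarrow> L t \<noteq> {}"
    and L: "\<And>t. closed (L t)" "\<And>t. convex (L t)" "bounded (L t0)" "m < t0"
  shows "\<Inter>(L ` {m<..}) \<noteq> {}"
proof -
  have "L t0 \<inter> \<Inter>(L ` {m<..}) \<noteq> {}"
  proof (rule bounded_closed_convex_imp_fip)
    fix \<F>' assume "finite \<F>'" "\<F>' \<subseteq> L ` {m<..}"
    then obtain T where T: "finite T" "T \<subseteq> {m<..}" "\<F>' = L ` T"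
      by (rule finite_subset_image[THEN exE]) blast
    define t where "t = Min (insert t0 T)"
    have "m < t" using T(1,2) L(4) by (auto simp: t_def)
    moreover have "L t \<subseteq> L s" if "s \<in> insert t0 T" for s
      using T(1) that by (intro mono) (simp add: t_def)
    ultimately show "L t0 \<inter> \<Inter>\<F>' \<noteq> {}" using ne T(3) by blast
  qed (use L in auto)
  then show ?thesis by blast
qed

section \<open>Kirszbraun extension to one more point\<close>

lemma mem_cball_sqrt_iff: "v \<in> cball a (sqrt r) \<longleftrightarrow> (norm (v - a))\<^sup>2 \<le> r"
  \<comment> \<open>also for \<open>r < 0\<close>, where \<open>sqrt r < 0\<close> and both sides are false\<close>
proof -
  have "dist a v = sqrt ((norm (v - a))\<^sup>2)" by (simp add: dist_norm norm_minus_commute)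
  then show ?thesis by (simp only: mem_cball real_sqrt_le_iff)
qed

lemma max_sq_dist_attains_min:
  fixes a :: "'i \<Rightarrow> 'a::{real_inner, complete_space}" and c :: "'i \<Rightarrow> real" and S :: "'i set"
  defines "F \<equiv> \<lambda>v. Max ((\<lambda>x. (norm (v - a x))\<^sup>2 - c x) ` S)"
  assumes S: "finite S" "S \<noteq> {}"
  shows "\<exists>w. \<forall>v. F w \<le> F v"
proof -
  define L where "L t = (\<Inter>x\<in>S. cball (a x) (sqrt (t + c x)))" for t
  have L_iff: "v \<in> L t \<longleftrightarrow> F v \<le> t" for v t
    using S by (simp add: L_def F_def mem_cball_sqrt_iff algebra_simps del: mem_cball)
  obtain x0 where x0: "x0 \<in> S" using S(2) by blast
  have "- c x0 \<le> F v" for v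
  proof -
    have "(norm (v - a x0))\<^sup>2 - c x0 \<le> F v" using S x0 unfolding F_def by (intro Max_ge) auto
    moreover have "0 \<le> (norm (v - a x0))\<^sup>2" by simp
    ultimately show ?thesis by linarith
  qed
  then have bdd: "bdd_below (range F)" by (intro bdd_belowI) auto
  define m where "m = Inf (range F)"
  have "\<Inter>(L ` {m<..}) \<noteq> {}"
  proof (rule nested_closed_convex_Inter_nonempty)
    show "L s \<subseteq> L t" if "s \<le> t" for s t using that by (auto simp: L_iff)
    show "L t \<noteq> {}" if t: "m < t" for t
    proof -
      obtain v where "F v < t" using cInf_lessD[of "range F" t] t by (auto simp: m_def)
      then have "v \<in> L t" by (simp add: L_iff)
      then show ?thesis by blast
    qed
    show "closed (L t)" "convex (L t)" for t unfolding L_def by (simp_all add: closed_INT convex_INT)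
    have "L (m + 1) \<subseteq> cball (a x0) (sqrt (m + 1 + c x0))" using x0 unfolding L_def by blast
    then show "bounded (L (m + 1))" by (rule bounded_subset[OF bounded_cball])
  qed simp
  then obtain w where "w \<in> \<Inter>(L ` {m<..})" by blast
  then have "F w \<le> t" if "m < t" for t using that by (simp add: L_iff)
  then have "F w \<le> m" by (rule dense_ge)
  then have "F w \<le> F v" for v using cInf_lower[of "F v" "range F"] bdd by (simp add: m_def)
  then show ?thesis by blast
qed

lemma nonexpansive_on_subset: "nonexpansive_on D N \<Longrightarrow> S \<subseteq> D \<Longrightarrow> nonexpansive_on S N"
  unfolding nonexpansive_on_def by blast

lemma kirszbraun_point_finite:
  fixes N :: "'a::{real_inner, complete_space} \<Rightarrow> 'a"
  assumes "finite S" "nonexpansive_on S N"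
  shows "\<exists>w. \<forall>x\<in>S. norm (w - N x) \<le> norm (z - x)"
proof (cases "S = {}")
  case False
  define f where "f x v = (norm (v - N x))\<^sup>2 - (norm (z - x))\<^sup>2" for x v
  define F where "F v = Max ((\<lambda>x. f x v) ` S)" for v
  have F_ge: "f x v \<le> F v" if "x \<in> S" for x v
    using assms(1) that unfolding F_def by (intro Max_ge) auto
  obtain w where min: "\<And>v. F w \<le> F v"
    using max_sq_dist_attains_min[where a = N and c = "\<lambda>x. (norm (z - x))\<^sup>2", OF assms(1) False]
    unfolding F_def f_def by blast
  define I where "I = {x\<in>S. f x w = F w}"
  have "w \<in> convex hull (N ` I)"
    using minimizer_of_max_mem_convex_hull_active[where a = N and c = "\<lambda>x. (norm (z - x))\<^sup>2" and w = w, OF assms(1) False] min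
    unfolding I_def F_def f_def by blast
  moreover have "nonexpansive_on I N" using assms(2) by (rule nonexpansive_on_subset) (auto simp: I_def)
  ultimately obtain x where x: "x \<in> I" "norm (w - N x) \<le> norm (z - x)"
    using nonexpansive_on_convex_hull_image by blast
  have "(norm (w - N x))\<^sup>2 \<le> (norm (z - x))\<^sup>2" using x(2) by (rule power_mono) simp
  moreover have "f x w = F w" using x(1) by (simp add: I_def)
  ultimately have "F w \<le> 0" unfolding f_def by linarith
  have "norm (w - N x) \<le> norm (z - x)" if "x \<in> S" for x
  proof -
    have "(norm (w - N x))\<^sup>2 \<le> (norm (z - x))\<^sup>2"
      using F_ge[OF that, of w] \<open>F w \<le> 0\<close> unfolding f_def by linarith
    then show ?thesis by (rule power2_le_imp_le) simp
  qed
  then show ?thesis by blast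
qed simp

lemma kirszbraun_point:
  fixes N :: "'a::{real_inner, complete_space} \<Rightarrow> 'a"
  assumes "nonexpansive_on D N"
  shows "\<exists>w. \<forall>x\<in>D. norm (w - N x) \<le> norm (z - x)"
proof (cases "D = {}")
  case False
  then obtain x0 where x0: "x0 \<in> D" by blast
  define B where "B x = cball (N x) (norm (z - x))" for x
  have "B x0 \<inter> \<Inter>(B ` D) \<noteq> {}"
  proof (rule bounded_closed_convex_imp_fip)
    fix \<F>' assume "finite \<F>'" "\<F>' \<subseteq> B ` D"
    then obtain S where S: "finite S" "S \<subseteq> D" "\<F>' = B ` S"
      by (rule finite_subset_image[THEN exE]) blast
    have "nonexpansive_on (insert x0 S) N" by (rule nonexpansive_on_subset[OF assms]) (use x0 S(2) in auto)
    then obtain w where "\<forall>x\<in>insert x0 S. norm (w - N x) \<le> norm (z - x)"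
      using kirszbraun_point_finite S(1) by blast
    then have "w \<in> B x0 \<inter> \<Inter>\<F>'" using S(3) by (auto simp: B_def dist_norm norm_minus_commute)
    then show "B x0 \<inter> \<Inter>\<F>' \<noteq> {}" by blast
  qed (auto simp: B_def)
  then obtain w where "\<forall>x\<in>D. dist (N x) w \<le> norm (z - x)" by (auto simp: B_def)
  then show ?thesis by (metis dist_norm dist_commute)
qed simp

section \<open>Resolvents of comonotone operators\<close>

lemma norm_conic_le_iff:
  fixes t u :: "'a::real_inner"
  assumes "0 < \<alpha>"
  shows "norm (\<alpha> *\<^sub>R t - (1 - \<alpha>) *\<^sub>R u) \<le> \<alpha> * norm (t + u) \<longleftrightarrow> (1 / (2 * \<alpha>) - 1) * (norm u)\<^sup>2 \<le> inner t u"
proof -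
  have lhs: "(norm (\<alpha> *\<^sub>R t - (1 - \<alpha>) *\<^sub>R u))\<^sup>2 = \<alpha>\<^sup>2 * (norm t)\<^sup>2 - 2 * \<alpha> * (1 - \<alpha>) * inner t u + (1 - \<alpha>)\<^sup>2 * (norm u)\<^sup>2"
    unfolding power2_norm_eq_inner by (simp add: inner_diff_left inner_diff_right inner_commute power2_eq_square algebra_simps)
  have rhs: "(\<alpha> * norm (t + u))\<^sup>2 = \<alpha>\<^sup>2 * ((norm t)\<^sup>2 + 2 * inner t u + (norm u)\<^sup>2)"
    by (simp add: power_mult_distrib power2_norm_eq_inner inner_add_left inner_add_right inner_commute)
  have gap: "(\<alpha> * norm (t + u))\<^sup>2 - (norm (\<alpha> *\<^sub>R t - (1 - \<alpha>) *\<^sub>R u))\<^sup>2 = 2 * \<alpha> * inner t u - (1 - 2 * \<alpha>) * (norm u)\<^sup>2"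
    unfolding lhs rhs by (simp add: algebra_simps power2_eq_square)
  have "norm (\<alpha> *\<^sub>R t - (1 - \<alpha>) *\<^sub>R u) \<le> \<alpha> * norm (t + u) \<longleftrightarrow> (norm (\<alpha> *\<^sub>R t - (1 - \<alpha>) *\<^sub>R u))\<^sup>2 \<le> (\<alpha> * norm (t + u))\<^sup>2"
    using assms by (simp add: power2_le_iff_abs_le)
  also have "\<dots> \<longleftrightarrow> (1 - 2 * \<alpha>) * (norm u)\<^sup>2 \<le> 2 * \<alpha> * inner t u"
    using gap by linarith
  also have "\<dots> \<longleftrightarrow> (1 / (2 * \<alpha>) - 1) * (norm u)\<^sup>2 \<le> inner t u"
  proof -
    have "(1 / (2 * \<alpha>) - 1) * (norm u)\<^sup>2 = (1 - 2 * \<alpha>) * (norm u)\<^sup>2 / (2 * \<alpha>)"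
      using assms by (simp add: field_simps)
    then show ?thesis using assms by (simp add: pos_divide_le_eq mult.commute)
  qed
  finally show ?thesis .
qed

lemma gra_minus_Id_inv_op: "gra (minus_Id (inv_op D T)) = {(T x, x - T x) | x. x \<in> D}"
  by (auto simp: gra_def minus_Id_def inv_op_def)

lemma comonotone_minus_Id_inv_op_iff:
  "comonotone \<rho> (minus_Id (inv_op D T)) \<longleftrightarrow>
    (\<forall>x\<in>D. \<forall>y\<in>D. \<rho> * (norm ((x - T x) - (y - T y)))\<^sup>2 \<le> inner (T x - T y) ((x - T x) - (y - T y)))"
  unfolding comonotone_def gra_minus_Id_inv_op by blast

lemma conically_nonexpansive_on_iff:
  assumes "0 < \<alpha>"
  shows "conically_nonexpansive_on \<alpha> D T \<longleftrightarrow> nonexpansive_on D (\<lambda>x. (1 / \<alpha>) *\<^sub>R (T x - (1 - \<alpha>) *\<^sub>R x))"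
proof
  assume "conically_nonexpansive_on \<alpha> D T"
  then obtain N where N: "nonexpansive_on D N" "\<forall>x\<in>D. T x = (1 - \<alpha>) *\<^sub>R x + \<alpha> *\<^sub>R N x"
    unfolding conically_nonexpansive_on_def by blast
  have "(1 / \<alpha>) *\<^sub>R (T x - (1 - \<alpha>) *\<^sub>R x) = N x" if "x \<in> D" for x
    using N(2) that assms by simp
  with N(1) show "nonexpansive_on D (\<lambda>x. (1 / \<alpha>) *\<^sub>R (T x - (1 - \<alpha>) *\<^sub>R x))"
    unfolding nonexpansive_on_def by simp
next
  assume "nonexpansive_on D (\<lambda>x. (1 / \<alpha>) *\<^sub>R (T x - (1 - \<alpha>) *\<^sub>R x))"
  moreover have "\<forall>x\<in>D. T x = (1 - \<alpha>) *\<^sub>R x + \<alpha> *\<^sub>R ((1 / \<alpha>) *\<^sub>R (T x - (1 - \<alpha>) *\<^sub>R x))"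
    using assms by simp
  ultimately show "conically_nonexpansive_on \<alpha> D T"
    unfolding conically_nonexpansive_on_def using assms by blast
qed

lemma conically_nonexpansive_on_iff_comonotone:
  assumes "0 < \<alpha>"
  shows "conically_nonexpansive_on \<alpha> D T \<longleftrightarrow> comonotone (1 / (2 * \<alpha>) - 1) (minus_Id (inv_op D T))"
proof -
  have "norm ((1 / \<alpha>) *\<^sub>R (T x - (1 - \<alpha>) *\<^sub>R x) - (1 / \<alpha>) *\<^sub>R (T y - (1 - \<alpha>) *\<^sub>R y)) \<le> norm (x - y)
    \<longleftrightarrow> (1 / (2 * \<alpha>) - 1) * (norm ((x - T x) - (y - T y)))\<^sup>2 \<le> inner (T x - T y) ((x - T x) - (y - T y))"
    for x y
  proof -
    define t where "t = T x - T y"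
    define u where "u = (x - T x) - (y - T y)"
    have "(1 / \<alpha>) *\<^sub>R (T x - (1 - \<alpha>) *\<^sub>R x) - (1 / \<alpha>) *\<^sub>R (T y - (1 - \<alpha>) *\<^sub>R y)
        = (1 / \<alpha>) *\<^sub>R (\<alpha> *\<^sub>R t - (1 - \<alpha>) *\<^sub>R u)"
      using assms by (simp add: t_def u_def algebra_simps)
    moreover have "x - y = t + u" by (simp add: t_def u_def)
    ultimately show ?thesis
      using norm_conic_le_iff[OF assms, of t u] assms
      by (simp add: t_def[symmetric] u_def[symmetric] divide_le_eq mult.commute)
  qed
  then show ?thesis
    unfolding conically_nonexpansive_on_iff[OF assms] comonotone_minus_Id_inv_op_iff nonexpansive_on_def by blast
qed

lemma comonotone_superset_gra_resolvent_UNIV: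
  fixes B :: "'a::real_inner \<Rightarrow> 'a set"
  assumes "-1 < \<rho>" "comonotone \<rho> B" "gra (minus_Id (inv_op UNIV T)) \<subseteq> gra B"
  shows "gra B = gra (minus_Id (inv_op UNIV T))"
proof
  show "gra B \<subseteq> gra (minus_Id (inv_op UNIV T))"
  proof
    fix pu assume "pu \<in> gra B"
    then obtain p u where pu: "pu = (p, u)" "(p, u) \<in> gra B" by (cases pu) auto
    define x where "x = p + u"
    have "(T x, x - T x) \<in> gra B" using assms(3) by (auto simp: gra_minus_Id_inv_op)
    then have "\<rho> * (norm (u - (x - T x)))\<^sup>2 \<le> inner (p - T x) (u - (x - T x))"
      using assms(2) pu(2) unfolding comonotone_def by blast
    moreover have "u - (x - T x) = - (p - T x)" by (simp add: x_def)
    ultimately have "\<rho> * (norm (p - T x))\<^sup>2 \<le> - (norm (p - T x))\<^sup>2"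
      by (simp only: norm_minus_cancel inner_minus_right power2_norm_eq_inner)
    then have "(1 + \<rho>) * (norm (p - T x))\<^sup>2 \<le> 0" by (simp add: algebra_simps)
    then have "p = T x" using assms(1) by (simp add: mult_le_0_iff)
    then show "pu \<in> gra (minus_Id (inv_op UNIV T))"
      using pu(1) by (auto simp: gra_minus_Id_inv_op x_def)
  qed
qed (fact assms(3))

lemma maximally_comonotone_minus_Id_inv_op_UNIV:
  fixes T :: "'a::real_inner \<Rightarrow> 'a"
  assumes "-1 < \<rho>" "comonotone \<rho> (minus_Id (inv_op UNIV T))"
  shows "maximally_comonotone \<rho> (minus_Id (inv_op UNIV T))"
  using assms comonotone_superset_gra_resolvent_UNIV[OF assms(1)]
  unfolding maximally_comonotone_def by blast

lemma domain_eq_UNIV_if_maximally_comonotone: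
  fixes T :: "'a::{real_inner, complete_space} \<Rightarrow> 'a"
  assumes \<alpha>: "0 < \<alpha>" and T: "conically_nonexpansive_on \<alpha> D T"
    and max: "maximally_comonotone (1 / (2 * \<alpha>) - 1) (minus_Id (inv_op D T))"
  shows "D = UNIV"
proof (rule ccontr)
  assume "D \<noteq> UNIV"
  then obtain z where z: "z \<notin> D" by auto
  define N where "N x = (1 / \<alpha>) *\<^sub>R (T x - (1 - \<alpha>) *\<^sub>R x)" for x
  have N: "nonexpansive_on D N"
    using T unfolding conically_nonexpansive_on_iff[OF \<alpha>] N_def[abs_def] .
  then obtain w where w: "\<forall>x\<in>D. norm (w - N x) \<le> norm (z - x)" using kirszbraun_point by blast
  define T' where "T' = T(z := (1 - \<alpha>) *\<^sub>R z + \<alpha> *\<^sub>R w)"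
  have "nonexpansive_on (insert z D) (N(z := w))"
    using N w z unfolding nonexpansive_on_def by (auto simp: norm_minus_commute)
  moreover have "\<forall>x\<in>insert z D. T' x = (1 - \<alpha>) *\<^sub>R x + \<alpha> *\<^sub>R (N(z := w)) x"
    using \<alpha> z by (auto simp: T'_def N_def)
  ultimately have "conically_nonexpansive_on \<alpha> (insert z D) T'"
    unfolding conically_nonexpansive_on_def using \<alpha> by blast
  then have "comonotone (1 / (2 * \<alpha>) - 1) (minus_Id (inv_op (insert z D) T'))"
    using conically_nonexpansive_on_iff_comonotone[OF \<alpha>] by blast
  moreover have "gra (minus_Id (inv_op D T)) \<subset> gra (minus_Id (inv_op (insert z D) T'))"
  proof -
    have "gra (minus_Id (inv_op D T)) \<subseteq> gra (minus_Id (inv_op (insert z D) T'))"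
      using z unfolding gra_minus_Id_inv_op T'_def by force
    moreover have "(T' z, z - T' z) \<notin> gra (minus_Id (inv_op D T))"
      using z unfolding gra_minus_Id_inv_op T'_def by (auto dest: arg_cong[of _ _ "\<lambda>(p, u). p + u"])
    moreover have "(T' z, z - T' z) \<in> gra (minus_Id (inv_op (insert z D) T'))"
      unfolding gra_minus_Id_inv_op by blast
    ultimately show ?thesis by blast
  qed
  ultimately show False using max unfolding maximally_comonotone_def by blast
qed

lemma conically_nonexpansive_on_UNIV_iff_maximally_comonotone:
  fixes T :: "'a::{real_inner, complete_space} \<Rightarrow> 'a"
  assumes "0 < \<alpha>"
  shows "(conically_nonexpansive_on \<alpha> D T \<and> D = UNIV) \<longleftrightarrow> maximally_comonotone (1 / (2 * \<alpha>) - 1) (minus_Id (inv_op D T))"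
proof
  assume "conically_nonexpansive_on \<alpha> D T \<and> D = UNIV"
  moreover have "-1 < 1 / (2 * \<alpha>) - 1" using assms by simp
  ultimately show "maximally_comonotone (1 / (2 * \<alpha>) - 1) (minus_Id (inv_op D T))"
    using maximally_comonotone_minus_Id_inv_op_UNIV conically_nonexpansive_on_iff_comonotone[OF assms] by blast
next
  assume max: "maximally_comonotone (1 / (2 * \<alpha>) - 1) (minus_Id (inv_op D T))"
  then have "conically_nonexpansive_on \<alpha> D T"
    using conically_nonexpansive_on_iff_comonotone[OF assms] unfolding maximally_comonotone_def by blast
  with domain_eq_UNIV_if_maximally_comonotone[OF assms _ max] show "conically_nonexpansive_on \<alpha> D T \<and> D = UNIV"
    by blast
qed

lemma nonexpansive_on_iff_conically_nonexpansive_on_1: "nonexpansive_on D T \<longleftrightarrow> conically_nonexpansive_on 1 D T"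
  using conically_nonexpansive_on_iff[of 1 D T] by simp

lemma averaged_on_iff_conically_nonexpansive_on: "\<alpha> < 1 \<Longrightarrow> averaged_on \<alpha> D T \<longleftrightarrow> conically_nonexpansive_on \<alpha> D T"
  unfolding averaged_on_def conically_nonexpansive_on_def by blast

theorem proposition3p9:
  fixes D :: "'a::{real_inner, complete_space} set"
    and T :: "'a \<Rightarrow> 'a"
    and A :: "'a \<Rightarrow> 'a set"
    and \<alpha> \<rho> :: real
  assumes "D \<noteq> {}"
    and "0 < \<alpha>"
    and "A = minus_Id (inv_op D T)"
    and "\<rho> = 1 / (2 * \<alpha>) - 1"
  shows "(conically_nonexpansive_on \<alpha> D T \<longleftrightarrow> comonotone \<rho> A)
    \<and> ((conically_nonexpansive_on \<alpha> D T \<and> D = UNIV) \<longleftrightarrow> maximally_comonotone \<rho> A)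
    \<and> (nonexpansive_on D T \<longleftrightarrow> comonotone (-1/2) A)
    \<and> ((nonexpansive_on D T \<and> D = UNIV) \<longleftrightarrow> maximally_comonotone (-1/2) A)
    \<and> (\<alpha> < 1 \<longrightarrow>
         (averaged_on \<alpha> D T \<longleftrightarrow> comonotone \<rho> A)
       \<and> ((averaged_on \<alpha> D T \<and> D = UNIV) \<longleftrightarrow> maximally_comonotone \<rho> A))"
proof -
  have half: "-1/2 = 1 / (2 * 1) - (1::real)" by simp
  have i: "conically_nonexpansive_on \<alpha> D T \<longleftrightarrow> comonotone \<rho> A"
    using conically_nonexpansive_on_iff_comonotone[OF assms(2)] assms(3,4) by simp
  have ii: "(conically_nonexpansive_on \<alpha> D T \<and> D = UNIV) \<longleftrightarrow> maximally_comonotone \<rho> A"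
    using conically_nonexpansive_on_UNIV_iff_maximally_comonotone[OF assms(2)] assms(3,4) by simp
  have iii: "nonexpansive_on D T \<longleftrightarrow> comonotone (-1/2) A"
    unfolding nonexpansive_on_iff_conically_nonexpansive_on_1 half assms(3)
    by (rule conically_nonexpansive_on_iff_comonotone) simp
  have iv: "(nonexpansive_on D T \<and> D = UNIV) \<longleftrightarrow> maximally_comonotone (-1/2) A"
    unfolding nonexpansive_on_iff_conically_nonexpansive_on_1 half assms(3)
    by (rule conically_nonexpansive_on_UNIV_iff_maximally_comonotone) simp
  show ?thesis using i ii iii iv averaged_on_iff_conically_nonexpansive_on[of \<alpha> D T] by blast
qed

end
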